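(* Under the hypotheses of the fidelity statement (that is: $\mathbf{X}\in[0,1]^{m\times 2n}$ with $n$ $(key,value)$ column pairs, $\delta\in(0,1)$, $b\ge\lceil\log_2(mn/\delta)\rceil$, and $\mathbf{X}_w$ obtained by keeping $key$ columns and moving each $value$ entry into the nearest (in interval index) green interval among $I_j=[\tfrac{j-1}{b},\tfrac{j}{b}]$, each interval green independently with probability $\tfrac12$ for each entry), for every $p\ge 1$, with probability at least $1-\delta$, $$\mathcal{W}_p(F_{\mathbf{X}},F_{\mathbf{X}_w})\le \frac{\sqrt{2n}\,\lceil\log_2(mn/\delta)\rceil}{b}.$$
   Context: $F_{\mathbf{X}}$ (resp. $F_{\mathbf{X}_w}$) denotes the empirical distribution on $\mathbb{R}^{2n}$ placing mass $1/m$ on each row of $\mathbf{X}$ (resp. $\mathbf{X}_w$), and $\mathcal{W}_p$ is the $p$-Wasserstein distance with respect to the Euclidean norm on $\mathbb{R}^{2n}$. *)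

theory Defs
  imports "HOL-Probability.Probability"
begin

text \<open>Points of R^d are represented as real lists of length d; Euclidean distance.\<close>
definition euclid_dist :: "real list \<Rightarrow> real list \<Rightarrow> real" where
  "euclid_dist xs ys = sqrt (\<Sum>i<length xs. (xs ! i - ys ! i)^2)"

definition mat_row :: "nat \<Rightarrow> (nat \<Rightarrow> nat \<Rightarrow> real) \<Rightarrow> nat \<Rightarrow> real list" where
  "mat_row n X i = map (X i) [0..<2*n]"

definition emp_dist :: "nat \<Rightarrow> nat \<Rightarrow> (nat \<Rightarrow> nat \<Rightarrow> real) \<Rightarrow> real list pmf" where
  "emp_dist m n X = map_pmf (mat_row n X) (pmf_of_set {0..<m})"

definition couplings :: "'a pmf \<Rightarrow> 'a pmf \<Rightarrow> ('a \<times> 'a) pmf set" where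
  "couplings \<mu> \<nu> = {\<pi>. map_pmf fst \<pi> = \<mu> \<and> map_pmf snd \<pi> = \<nu>}"

definition wasserstein :: "real \<Rightarrow> real list pmf \<Rightarrow> real list pmf \<Rightarrow> real" where
  "wasserstein p \<mu> \<nu> =
     (INF \<pi>\<in>couplings \<mu> \<nu>. measure_pmf.expectation \<pi> (\<lambda>(x, y). euclid_dist x y powr p)) powr (1 / p)"

text \<open>Intervals I_j = [(j-1)/b, j/b], j = 1..b, and the index of the interval containing x
  (half-open convention [(j-1)/b, j/b), with x = 1 in I_b).\<close>
definition interval :: "nat \<Rightarrow> nat \<Rightarrow> real set" where
  "interval b j = {real (j - 1) / real b .. real j / real b}"

definition interval_index :: "nat \<Rightarrow> real \<Rightarrow> nat" where
  "interval_index b x = min b (nat \<lfloor>x * real b\<rfloor> + 1)"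

definition valid_move :: "nat \<Rightarrow> (real \<Rightarrow> nat set \<Rightarrow> real) \<Rightarrow> bool" where
  "valid_move b mv \<longleftrightarrow>
     (\<forall>x\<in>{0..1}. \<forall>G. G \<subseteq> {1..b} \<and> G \<noteq> {} \<longrightarrow>
        (\<exists>j\<in>G. mv x G \<in> interval b j \<and>
           (\<forall>j'\<in>G. \<bar>int j - int (interval_index b x)\<bar> \<le> \<bar>int j' - int (interval_index b x)\<bar>)))"

text \<open>Column 2k is the k-th key column, column 2k+1 the k-th value column.
  g (i,k,j) = interval j is green for the value entry of row i, pair k.\<close>
definition watermark :: "nat \<Rightarrow> (nat \<Rightarrow> nat \<Rightarrow> real \<Rightarrow> nat set \<Rightarrow> real) \<Rightarrow>
    (nat \<Rightarrow> nat \<Rightarrow> real) \<Rightarrow> (nat \<times> nat \<times> nat \<Rightarrow> bool) \<Rightarrow> nat \<Rightarrow> nat \<Rightarrow> real" where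
  "watermark b mv X g i c =
     (if even c then X i c
      else mv i (c div 2) (X i c) {j\<in>{1..b}. g (i, c div 2, j)})"

definition green_pmf :: "nat \<Rightarrow> nat \<Rightarrow> nat \<Rightarrow> (nat \<times> nat \<times> nat \<Rightarrow> bool) pmf" where
  "green_pmf m n b = Pi_pmf ({0..<m} \<times> {0..<n} \<times> {1..b}) False (\<lambda>_. bernoulli_pmf (1/2))"

end

theory Submission
  imports Defs
begin

text \<open>Couple every row of X with the same row of its watermarked copy. If each value entry
  has a green interval within index distance L of its own interval, it moves by at most L/b,
  so every coupled pair is within \<open>sqrt(2n) L/b\<close>, and so is the Wasserstein distance. A fixed
  window of L consecutive intervals around the entry is entirely red with probability \<open>2^-L\<close>;
  a union bound over the mn value entries and \<open>2^L \<ge> mn/\<delta>\<close> finish the proof.\<close>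

definition has_green_near :: "nat \<Rightarrow> nat set \<Rightarrow> nat \<Rightarrow> bool" where
  "has_green_near L G i \<longleftrightarrow> (\<exists>j\<in>G. \<bar>int j - int i\<bar> < int L)"

lemma interval_index_bounds:
  assumes "0 \<le> x" "x \<le> 1" "0 < b"
  shows "1 \<le> interval_index b x" "interval_index b x \<le> b"
    "real (interval_index b x) - 1 \<le> x * real b" "x * real b \<le> real (interval_index b x)"
proof -
  let ?f = "\<lfloor>x * real b\<rfloor>"
  have f: "0 \<le> ?f" "real_of_int ?f \<le> x * real b" "x * real b < real_of_int ?f + 1"
    using assms by simp_all
  have xb: "x * real b \<le> real b" using assms by (simp add: mult_left_le_one_le)
  show "1 \<le> interval_index b x" "interval_index b x \<le> b"
    using assms unfolding interval_index_def by auto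
  have "real (interval_index b x) - 1 \<le> x * real b \<and> x * real b \<le> real (interval_index b x)"
  proof (cases "nat ?f + 1 \<le> b")
    case True
    then have "real (interval_index b x) = real_of_int ?f + 1"
      using f(1) unfolding interval_index_def by simp
    then show ?thesis using f by linarith
  next
    case False
    then have "interval_index b x = b" unfolding interval_index_def by simp
    moreover have "real b \<le> real_of_int ?f" using False f(1) by linarith
    ultimately show ?thesis using f xb by simp linarith
  qed
  then show "real (interval_index b x) - 1 \<le> x * real b" "x * real b \<le> real (interval_index b x)"
    by auto
qed

lemma dist_le_interval_gap:
  assumes "y \<in> interval b j" "1 \<le> j" "0 < b" "0 \<le> x" "x \<le> 1"
  shows "\<bar>y - x\<bar> \<le> (real_of_int \<bar>int j - int (interval_index b x)\<bar> + 1) / real b"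
proof -
  let ?i = "interval_index b x"
  have "real (j - 1) = real j - 1" using assms by simp
  then have y: "real j - 1 \<le> y * real b" "y * real b \<le> real j"
    using assms(1,3) unfolding interval_def by (auto simp: field_simps)
  have "\<bar>y * real b - x * real b\<bar> \<le> real_of_int \<bar>int j - int ?i\<bar> + 1"
    using y interval_index_bounds(3,4)[OF assms(4,5,3)] by (auto simp: abs_if)
  then have "\<bar>y - x\<bar> * real b \<le> real_of_int \<bar>int j - int ?i\<bar> + 1"
    by (simp add: abs_mult left_diff_distrib[symmetric])
  then show ?thesis using assms(3) by (simp add: field_simps)
qed

lemma valid_move_dist_le:
  assumes "valid_move b mv" "x \<in> {0..1}" "G \<subseteq> {1..b}"
    and "has_green_near L G (interval_index b x)"
  shows "\<bar>mv x G - x\<bar> \<le> real L / real b"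
proof -
  let ?i = "interval_index b x"
  obtain j1 where j1: "j1 \<in> G" "\<bar>int j1 - int ?i\<bar> < int L"
    using assms(4) unfolding has_green_near_def by blast
  then have "G \<noteq> {}" "0 < b" using assms(3) by auto
  then obtain j where j: "j \<in> G" "mv x G \<in> interval b j"
      "\<forall>j'\<in>G. \<bar>int j - int ?i\<bar> \<le> \<bar>int j' - int ?i\<bar>"
    using assms(1-3) unfolding valid_move_def by meson
  have "\<bar>mv x G - x\<bar> \<le> (real_of_int \<bar>int j - int ?i\<bar> + 1) / real b"
    using dist_le_interval_gap[OF j(2)] j(1) assms(2,3) \<open>0 < b\<close> by auto
  also have "\<dots> \<le> real L / real b"
    using j(3) j1 \<open>0 < b\<close> by (intro divide_right_mono) force+
  finally show ?thesis .
qed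

lemma euclid_dist_mat_row_le:
  assumes "\<forall>c<2*n. \<bar>X i c - Y i c\<bar> \<le> e" "0 \<le> e"
  shows "euclid_dist (mat_row n X i) (mat_row n Y i) \<le> sqrt (2 * real n) * e"
proof -
  have "(\<Sum>c<2*n. (X i c - Y i c)^2) \<le> (\<Sum>c<2*n. e^2)"
    using assms by (intro sum_mono) (metis abs_ge_zero lessThan_iff power2_abs power_mono)
  then have "sqrt (\<Sum>c<2*n. (X i c - Y i c)^2) \<le> sqrt (2 * real n * e^2)"
    by simp
  also have "\<dots> = sqrt (2 * real n) * e" using assms(2) by (simp add: real_sqrt_mult)
  finally show ?thesis unfolding euclid_dist_def mat_row_def by simp
qed

lemma wasserstein_emp_dist_le:
  assumes "0 < m" "1 \<le> p" "0 \<le> B"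
    and "\<forall>i<m. euclid_dist (mat_row n X i) (mat_row n Y i) \<le> B"
  shows "wasserstein p (emp_dist m n X) (emp_dist m n Y) \<le> B"
proof -
  define cost where "cost = (\<lambda>\<pi>. measure_pmf.expectation \<pi> (\<lambda>(x, y). euclid_dist x y powr p))"
  define \<pi> where "\<pi> = map_pmf (\<lambda>i. (mat_row n X i, mat_row n Y i)) (pmf_of_set {0..<m})"
  let ?C = "couplings (emp_dist m n X) (emp_dist m n Y)"
  have "\<pi> \<in> ?C"
    unfolding couplings_def \<pi>_def emp_dist_def by (simp add: pmf.map_comp o_def)
  have cost_nonneg: "0 \<le> cost \<sigma>" for \<sigma>
    unfolding cost_def by (rule Bochner_Integration.integral_nonneg) (auto simp: euclid_dist_def)
  have "cost \<pi> = (\<Sum>i\<in>{0..<m}. euclid_dist (mat_row n X i) (mat_row n Y i) powr p) / real m"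
    unfolding cost_def \<pi>_def using assms(1) by (simp add: integral_pmf_of_set)
  also have "\<dots> \<le> (\<Sum>i\<in>{0..<m}. B powr p) / real m"
    using assms by (intro divide_right_mono sum_mono powr_mono2) (auto simp: euclid_dist_def intro: sum_nonneg)
  also have "\<dots> = B powr p" using assms(1) by simp
  finally have "(INF \<sigma>\<in>?C. cost \<sigma>) \<le> B powr p"
    using cInf_lower[OF imageI[OF \<open>\<pi> \<in> ?C\<close>], of cost] cost_nonneg
    by (meson bdd_belowI2 order_trans)
  moreover have "0 \<le> (INF \<sigma>\<in>?C. cost \<sigma>)"
    using \<open>\<pi> \<in> ?C\<close> cost_nonneg by (intro cINF_greatest) auto
  ultimately have "wasserstein p (emp_dist m n X) (emp_dist m n Y) \<le> (B powr p) powr (1/p)"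
    unfolding wasserstein_def cost_def[symmetric] using assms(2) by (intro powr_mono2) auto
  also have "\<dots> = B" using assms by (simp add: powr_powr)
  finally show ?thesis .
qed

lemma watermark_wasserstein_le:
  assumes "0 < m" "1 \<le> p"
    and "\<forall>i<m. \<forall>c<2*n. 0 \<le> X i c \<and> X i c \<le> 1"
    and "\<forall>i k. valid_move b (mv i k)"
    and "\<forall>i<m. \<forall>k<n. has_green_near L {j\<in>{1..b}. g (i, k, j)} (interval_index b (X i (2*k+1)))"
  shows "wasserstein p (emp_dist m n X) (emp_dist m n (watermark b mv X g))
           \<le> sqrt (2 * real n) * real L / real b"
proof -
  have "\<bar>X i c - watermark b mv X g i c\<bar> \<le> real L / real b" if "i < m" "c < 2*n" for i c
  proof (cases "even c")
    case False
    then obtain k where c: "c = 2 * k + 1" by (metis oddE)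
    then have "k < n" "c div 2 = k" using that(2) by auto
    moreover have "{j\<in>{1..b}. g (i, k, j)} \<subseteq> {1..b}" by auto
    ultimately show ?thesis
      using valid_move_dist_le[of b "mv i k" "X i c" "{j\<in>{1..b}. g (i, k, j)}" L] assms(3-5) that c
      by (auto simp: watermark_def abs_minus_commute)
  qed (simp add: watermark_def)
  then show ?thesis
    using assms(1,2) euclid_dist_mat_row_le[of n X _ "watermark b mv X g" "real L / real b"]
    by (intro wasserstein_emp_dist_le) auto
qed

lemma prob_Pi_bernoulli_all_false:
  assumes "finite A" "S \<subseteq> A"
  shows "measure_pmf.prob (Pi_pmf A False (\<lambda>_. bernoulli_pmf (1/2))) {g. \<forall>x\<in>S. \<not> g x}
           = (1/2) ^ card S"
proof -
  have "{g. \<forall>x\<in>S. \<not> g x} = Pi A (\<lambda>x. if x \<in> S then {False} else UNIV)"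
    using assms(2) unfolding Pi_def by auto
  then have "measure_pmf.prob (Pi_pmf A False (\<lambda>_. bernoulli_pmf (1/2))) {g. \<forall>x\<in>S. \<not> g x}
      = (\<Prod>x\<in>A. measure_pmf.prob (bernoulli_pmf (1/2)) (if x \<in> S then {False} else UNIV))"
    using assms(1) by (simp add: measure_Pi_pmf_Pi)
  also have "\<dots> = (\<Prod>x\<in>A. if x \<in> S then 1/2 else 1)"
    by (intro prod.cong) (auto simp: measure_pmf_single)
  also have "\<dots> = (1/2) ^ card S"
    using assms by (simp add: prod.If_cases Int_absorb1)
  finally show ?thesis .
qed

lemma prob_no_green_near_le:
  assumes "i < m" "k < n" "1 \<le> L" "L \<le> b" "1 \<le> x" "x \<le> b"
  shows "measure_pmf.prob (green_pmf m n b) {g. \<not> has_green_near L {j\<in>{1..b}. g (i, k, j)} x}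
           \<le> (1/2) ^ L"
proof -
  \<comment> \<open>the window starting at x, shifted left just enough to stay inside \<open>{1..b}\<close>\<close>
  define W where "W = {min x (b + 1 - L)..<min x (b + 1 - L) + L}"
  define S where "S = (\<lambda>j. (i, k, j)) ` W"
  have W: "W \<subseteq> {1..b}" "\<forall>j\<in>W. \<bar>int j - int x\<bar> < int L"
    using assms unfolding W_def by auto
  have S: "S \<subseteq> {0..<m} \<times> {0..<n} \<times> {1..b}" "card S = L"
    using W(1) assms(1,2) unfolding S_def by (auto simp: card_image inj_on_def W_def)
  have "{g. \<not> has_green_near L {j\<in>{1..b}. g (i, k, j)} x} \<subseteq> {g. \<forall>y\<in>S. \<not> g y}"
    using W unfolding S_def has_green_near_def by (force simp: subset_iff)
  then have "measure_pmf.prob (green_pmf m n b) {g. \<not> has_green_near L {j\<in>{1..b}. g (i, k, j)} x}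
      \<le> measure_pmf.prob (green_pmf m n b) {g. \<forall>y\<in>S. \<not> g y}"
    by (intro measure_pmf.finite_measure_mono) auto
  also have "\<dots> = (1/2) ^ L"
    unfolding green_pmf_def using S by (subst prob_Pi_bernoulli_all_false) auto
  finally show ?thesis .
qed

lemma prob_all_green_near_ge:
  assumes "1 \<le> L" "L \<le> b" "\<forall>i<m. \<forall>k<n. 1 \<le> idx i k \<and> idx i k \<le> b"
  shows "measure_pmf.prob (green_pmf m n b)
           {g. \<forall>i<m. \<forall>k<n. has_green_near L {j\<in>{1..b}. g (i, k, j)} (idx i k)}
         \<ge> 1 - real m * real n * (1/2) ^ L"
proof -
  let ?P = "measure_pmf.prob (green_pmf m n b)"
  let ?Good = "{g. \<forall>i<m. \<forall>k<n. has_green_near L {j\<in>{1..b}. g (i, k, j)} (idx i k)}"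
  define Bad where "Bad = (\<lambda>(i, k). {g. \<not> has_green_near L {j\<in>{1..b}. g (i, k, j)} (idx i k)})"
  have "?P (UNIV - ?Good) \<le> ?P (\<Union>ik\<in>{0..<m} \<times> {0..<n}. Bad ik)"
    unfolding Bad_def by (intro measure_pmf.finite_measure_mono) auto
  also have "\<dots> \<le> (\<Sum>ik\<in>{0..<m} \<times> {0..<n}. ?P (Bad ik))"
    by (intro measure_pmf.finite_measure_subadditive_finite) auto
  also have "\<dots> \<le> (\<Sum>ik\<in>{0..<m} \<times> {0..<n}. (1/2) ^ L)"
  proof (intro sum_mono)
    fix ik assume "ik \<in> {0..<m} \<times> {0..<n}"
    then obtain i k where "ik = (i, k)" "i < m" "k < n" by auto
    then show "?P (Bad ik) \<le> (1/2) ^ L"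
      unfolding Bad_def using assms prob_no_green_near_le[of i m k n L b "idx i k"] by simp
  qed
  also have "\<dots> = real m * real n * (1/2) ^ L" by simp
  finally show ?thesis
    using measure_pmf.prob_compl[of ?Good "green_pmf m n b"] by simp
qed

lemma le_two_pow_ceiling_log:
  assumes "1 < r"
  shows "r \<le> 2 ^ nat \<lceil>log 2 r\<rceil>"
proof -
  have "r = 2 powr (log 2 r)" using assms by simp
  also have "\<dots> \<le> 2 powr (real (nat \<lceil>log 2 r\<rceil>))" by (intro powr_mono) linarith+
  also have "\<dots> = 2 ^ nat \<lceil>log 2 r\<rceil>" by (simp add: powr_realpow)
  finally show ?thesis .
qed

theorem mainTheorem3:
  fixes m n b :: nat and \<delta> p :: real
    and X :: "nat \<Rightarrow> nat \<Rightarrow> real"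
    and mv :: "nat \<Rightarrow> nat \<Rightarrow> real \<Rightarrow> nat set \<Rightarrow> real"
  assumes "0 < m" and "0 < n"
    and "\<forall>i<m. \<forall>c<2*n. 0 \<le> X i c \<and> X i c \<le> 1"
    and "0 < \<delta>" and "\<delta> < 1"
    and "real b \<ge> real_of_int \<lceil>log 2 (real m * real n / \<delta>)\<rceil>"
    and "\<forall>i k. valid_move b (mv i k)"
    and "1 \<le> p"
  shows "measure_pmf.prob (green_pmf m n b)
           {g. wasserstein p (emp_dist m n X) (emp_dist m n (watermark b mv X g))
                 \<le> sqrt (2 * real n) * real_of_int \<lceil>log 2 (real m * real n / \<delta>)\<rceil> / real b}
         \<ge> 1 - \<delta>"
proof -
  define r where "r = real m * real n / \<delta>"
  define L where "L = nat \<lceil>log 2 r\<rceil>"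
  have "1 \<le> real m * real n"
    using assms(1,2) by (metis One_nat_def Suc_leI nat_0_less_mult_iff of_nat_1 of_nat_le_iff of_nat_mult)
  then have "1 < r" unfolding r_def using assms(4,5) by (simp add: less_divide_eq)
  then have "0 < log 2 r" by simp
  then have L: "real_of_int \<lceil>log 2 r\<rceil> = real L" "1 \<le> L"
    unfolding L_def by linarith+
  then have "L \<le> b" using assms(6) unfolding r_def by simp
  have "real m * real n * (1/2) ^ L \<le> \<delta>"
    using le_two_pow_ceiling_log[OF \<open>1 < r\<close>] assms(4)
    unfolding r_def L_def by (simp add: field_simps power_divide)
  then have "1 - \<delta> \<le> 1 - real m * real n * (1/2) ^ L" by simp
  also have "\<dots> \<le> measure_pmf.prob (green_pmf m n b)
      {g. \<forall>i<m. \<forall>k<n. has_green_near L {j\<in>{1..b}. g (i, k, j)} (interval_index b (X i (2*k+1)))}"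
    using interval_index_bounds(1,2) assms(3) L(2) \<open>L \<le> b\<close>
    by (intro prob_all_green_near_ge[OF L(2) \<open>L \<le> b\<close>]) auto
  also have "\<dots> \<le> measure_pmf.prob (green_pmf m n b)
      {g. wasserstein p (emp_dist m n X) (emp_dist m n (watermark b mv X g))
            \<le> sqrt (2 * real n) * real L / real b}"
    using watermark_wasserstein_le[OF assms(1,8,3,7)] by (intro measure_pmf.finite_measure_mono) auto
  finally show ?thesis unfolding r_def[symmetric] L(1) .
qed

end
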